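(* Let $\mathcal{U}$ be a set of optimization problems equipped with a binary relation $\subseteq_{\mathcal{S}}$ ("is a subproblem of") that is transitive: for all $\mathcal{P}_1,\mathcal{P}_2,\mathcal{P}_3\in\mathcal{U}$, if $\mathcal{P}_1\subseteq_{\mathcal{S}}\mathcal{P}_2$ and $\mathcal{P}_2\subseteq_{\mathcal{S}}\mathcal{P}_3$ then $\mathcal{P}_1\subseteq_{\mathcal{S}}\mathcal{P}_3$. Let $\mathbb{T}$ be a finite rooted tree whose nodes are labelled by problems in $\mathcal{U}$, whose root $\mathcal{R}$ satisfies $\mathcal{R}\subseteq_{\mathcal{S}}\mathcal{P}$ for every $\mathcal{P}\in\mathcal{U}$, and which is subproblem order-preserving, i.e. whenever node $\mathcal{P}_i$ is an ancestor of node $\mathcal{P}_j$, we have $\mathcal{P}_i\subseteq_{\mathcal{S}}\mathcal{P}_j$. Let $\mathcal{P}\in\mathcal{U}$ be a new problem, and let $\mathcal{P}^{(M)}$ be the node obtained by the following search: start at the current node $\mathcal{N}=\mathcal{R}$; while some child $\mathcal{Q}$ of $\mathcal{N}$ satisfies $\mathcal{Q}\subseteq_{\mathcal{S}}\mathcal{P}$, move $\mathcal{N}$ to one such child; when no child of $\mathcal{N}$ satisfies this, set $\mathcal{P}^{(M)}=\mathcal{N}$. Form the tree $\mathbb{T}'$ by inserting $\mathcal{P}$ as a new child of $\mathcal{P}^{(M)}$, and, for each child $\mathcal{P}^{(M)}_k$ of $\mathcal{P}^{(M)}$ in $\mathbb{T}$: if $\mathcal{P}\subseteq_{\mathcal{S}}\mathcal{P}^{(M)}_k$,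 re-attach $\mathcal{P}^{(M)}_k$ (with its subtree) as a child of $\mathcal{P}$; otherwise leave $\mathcal{P}^{(M)}_k$ as a child of $\mathcal{P}^{(M)}$ (a sibling of $\mathcal{P}$). Then $\mathbb{T}'$ is again subproblem order-preserving. Consequently, any sequence of such insertions starting from the tree consisting only of the root preserves the subproblem order-preserving property.
   Context: In the paper, problems are operations-research optimization problems and $\tilde{\mathcal{P}}\subseteq_{\mathcal{S}}\mathcal{P}$ means $\tilde{\mathcal{P}}$ is a subproblem of $\mathcal{P}$ (its optimization model is obtained from that of $\mathcal{P}$ by keeping a subset of the variables, the part of the objective depending only on them, and some of the constraints restricted to them); the paper asserts this relation is transitive. The root of the "modeling tree" is an abstract problem class of which every problem is regarded as a subproblem-extension. A modeling tree is called subproblem order-preserving if every ancestor node's problem is a subproblem of every descendant node's problem. The update procedure is the tree search followed by node insertion described in the claim. *)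

theory Defs
  imports Main
begin

datatype 'p rtree = Node 'p "'p rtree list"

fun label :: "'p rtree \<Rightarrow> 'p" where
  "label (Node p ts) = p"

fun children :: "'p rtree \<Rightarrow> 'p rtree list" where
  "children (Node p ts) = ts"

fun labels :: "'p rtree \<Rightarrow> 'p set" where
  "labels (Node p ts) = insert p (\<Union>t\<in>set ts. labels t)"

text \<open>Subproblem order-preserving: every ancestor is a subproblem of every
  (proper) descendant.\<close>
fun order_preserving :: "('p \<Rightarrow> 'p \<Rightarrow> bool) \<Rightarrow> 'p rtree \<Rightarrow> bool" where
  "order_preserving sub (Node p ts) =
     ((\<forall>t\<in>set ts. \<forall>q\<in>labels t. sub p q) \<and> (\<forall>t\<in>set ts. order_preserving sub t))"

text \<open>The update procedure: search (nondeterministically descend into some child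
  Q with sub Q P while possible), then insert P at the reached node P^(M),
  moving the children Q' of P^(M) with sub P Q' (with their subtrees) below P.
  update sub P T T' means T' is a possible result of updating T by P.\<close>
inductive update :: "('p \<Rightarrow> 'p \<Rightarrow> bool) \<Rightarrow> 'p \<Rightarrow> 'p rtree \<Rightarrow> 'p rtree \<Rightarrow> bool"
  for sub :: "'p \<Rightarrow> 'p \<Rightarrow> bool" and P :: 'p where
  insert_here:
    "(\<forall>t\<in>set ts. \<not> sub (label t) P) \<Longrightarrow>
     update sub P (Node r ts)
       (Node r (filter (\<lambda>t. \<not> sub P (label t)) ts @
                [Node P (filter (\<lambda>t. sub P (label t)) ts)]))"
| descend:
    "i < length ts \<Longrightarrow> sub (label (ts ! i)) P \<Longrightarrow> update sub P (ts ! i) t' \<Longrightarrow>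
     update sub P (Node r ts) (Node r (ts[i := t']))"

inductive reachable :: "('p \<Rightarrow> 'p \<Rightarrow> bool) \<Rightarrow> 'p set \<Rightarrow> 'p \<Rightarrow> 'p rtree \<Rightarrow> bool"
  for sub :: "'p \<Rightarrow> 'p \<Rightarrow> bool" and U :: "'p set" and R :: 'p where
  root_only: "reachable sub U R (Node R [])"
| step: "reachable sub U R T \<Longrightarrow> P \<in> U \<Longrightarrow> update sub P T T' \<Longrightarrow> reachable sub U R T'"

end

theory Submission
  imports Defs
begin

text \<open>The search only descends into subproblems of \<open>P\<close>, so by transitivity every
  ancestor of the inserted node is a subproblem of \<open>P\<close>. A subtree is re-attached
  below \<open>P\<close> only if \<open>P\<close> is a subproblem of its root, and then, by transitivity again,
  of every node in it. The reachable trees have root \<open>R\<close> and labels in \<open>U\<close>, so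
  every insertion starts from a tree satisfying these hypotheses.\<close>

lemma insert_nth_set_update:
  assumes "i < length xs"
  shows "insert (xs ! i) (set (xs[i := y])) = insert y (set xs)"
  using set_update_subset_insert[of xs i y] set_update_memI[OF assms, of y] nth_mem[OF assms]
    set_update_subset_insert[of "xs[i := y]" i "xs ! i"]
  by (auto simp: list_update_overwrite)

lemma label_in_labels: "label t \<in> labels t"
  by (cases t) auto

lemma label_update: "update sub P T T' \<Longrightarrow> label T' = label T"
  by (induction rule: update.induct) auto

lemma labels_update: "update sub P T T' \<Longrightarrow> labels T' = insert P (labels T)"
proof (induction rule: update.induct)
  case (insert_here ts r)
  then show ?case by auto
next
  case (descend i ts t' r)
  have "(\<Union>t\<in>set (ts[i := t']). labels t) = (\<Union>t\<in>insert (ts ! i) (set (ts[i := t'])). labels t)"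
    using descend.IH set_update_memI[OF descend.hyps(1)] by auto
  also have "\<dots> = insert P (\<Union>t\<in>set ts. labels t)"
    using descend.IH nth_mem[OF descend.hyps(1)]
    by (auto simp: insert_nth_set_update[OF descend.hyps(1)])
  finally show ?case by auto
qed

lemma order_preserving_root_sub:
  "order_preserving sub t \<Longrightarrow> q \<in> labels t \<Longrightarrow> q \<noteq> label t \<Longrightarrow> sub (label t) q"
  by (cases t) auto

lemma order_preserving_update:
  assumes trans: "transp_on U sub"
  shows "update sub P T T' \<Longrightarrow> P \<in> U \<Longrightarrow> labels T \<subseteq> U \<Longrightarrow> order_preserving sub T
    \<Longrightarrow> sub (label T) P \<Longrightarrow> order_preserving sub T'"
proof (induction rule: update.induct)
  case (insert_here ts r)
  let ?moved = "filter (\<lambda>t. sub P (label t)) ts"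
  have moved_below_P: "sub P q" if t: "t \<in> set ?moved" and q: "q \<in> labels t" for t q
  proof (cases "q = label t")
    case False
    then have "sub (label t) q"
      using order_preserving_root_sub[of sub t q] q t insert_here.prems(3) by simp
    moreover have "label t \<in> U" "q \<in> U"
      using insert_here.prems(2) t q label_in_labels by fastforce+
    ultimately show ?thesis
      using transp_onD[OF trans, of P "label t" q] insert_here.prems(1) t by simp
  qed (use t in simp)
  have "order_preserving sub (Node P ?moved)"
    using moved_below_P insert_here.prems(3) by simp
  moreover have "\<forall>q\<in>labels (Node P ?moved). sub r q"
    using insert_here.prems(3,4) by auto
  ultimately show ?case using insert_here.prems(3) by auto
next
  case (descend i ts t' r)
  let ?t = "ts ! i"
  have t_mem: "?t \<in> set ts" using descend.hyps(1) by simp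
  have "order_preserving sub t'"
    using descend.IH descend.hyps(2) descend.prems t_mem by auto
  then have children_op: "\<forall>u\<in>insert t' (set ts). order_preserving sub u"
    using descend.prems(3) by simp
  have "sub r P"
  proof -
    have "sub r (label ?t)"
      using descend.prems(3) t_mem label_in_labels by fastforce
    moreover have "label ?t \<in> U"
      using descend.prems(2) t_mem label_in_labels by fastforce
    ultimately show ?thesis
      using transp_onD[OF trans, of r "label ?t" P] descend.hyps(2) descend.prems(1,2) by simp
  qed
  then have children_below_r: "\<forall>u\<in>insert t' (set ts). \<forall>q\<in>labels u. sub r q"
    using labels_update[OF descend.hyps(3)] descend.prems(3) t_mem by auto
  show ?case
    using children_op children_below_r set_update_subset_insert[of ts i t'] by (simp, blast)
qed

lemma reachable_label_labels:
  "reachable sub U R T \<Longrightarrow> R \<in> U \<Longrightarrow> label T = R \<and> labels T \<subseteq> U"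
  by (induction rule: reachable.induct) (auto simp: label_update labels_update)

theorem proposition1:
  fixes sub :: "'p \<Rightarrow> 'p \<Rightarrow> bool" and U :: "'p set" and R :: 'p
  assumes trans: "\<And>P1 P2 P3. P1 \<in> U \<Longrightarrow> P2 \<in> U \<Longrightarrow> P3 \<in> U \<Longrightarrow>
                     sub P1 P2 \<Longrightarrow> sub P2 P3 \<Longrightarrow> sub P1 P3"
    and R_in: "R \<in> U"
    and root: "\<And>Q. Q \<in> U \<Longrightarrow> sub R Q"
  shows "(\<forall>T P T'. label T = R \<and> labels T \<subseteq> U \<and> order_preserving sub T \<and> P \<in> U
            \<and> update sub P T T' \<longrightarrow> order_preserving sub T')
       \<and> (\<forall>T. reachable sub U R T \<longrightarrow> order_preserving sub T)"
proof -
  have transp: "transp_on U sub" using trans by (blast intro: transp_onI)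
  have update_step: "\<forall>T P T'. label T = R \<and> labels T \<subseteq> U \<and> order_preserving sub T \<and> P \<in> U
            \<and> update sub P T T' \<longrightarrow> order_preserving sub T'"
  proof (intro allI impI)
    fix T P T'
    assume "label T = R \<and> labels T \<subseteq> U \<and> order_preserving sub T \<and> P \<in> U \<and> update sub P T T'"
    then show "order_preserving sub T'" using order_preserving_update[OF transp] root by auto
  qed
  have "order_preserving sub T" if "reachable sub U R T" for T
    using that
  proof (induction rule: reachable.induct)
    case (step T P T')
    then show ?case using update_step reachable_label_labels[OF step.hyps(1) R_in] by blast
  qed simp
  with update_step show ?thesis by blast
qed

end
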